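(* Let $\mathfrak{g}$ be the $7$-dimensional Lie algebra with basis $\{e_1,\dots,e_7\}$ whose Lie bracket is determined by $A_1\in\mathfrak{gl}_2(\mathbb{R})$ and $A,B,C\in\mathfrak{gl}_4(\mathbb{R})$ as described in the context, and let $\varphi=e^{127}+e^{347}+e^{567}+e^{135}-e^{146}-e^{236}-e^{245}$. Then: (i) $\ast\varphi=e^{3456}+\omega_7\wedge e^{12}+\omega_1\wedge e^{27}-\omega_2\wedge e^{17}$; (ii) $d\ast\varphi=-\operatorname{tr}(A)\,e^{34567}+\left(\theta(A)\omega_7-\operatorname{tr}(A_1)\,\omega_7+\theta(B)\omega_1+\theta(C)\omega_2\right)\wedge e^{127}$; (iii) $\ast d\ast\varphi=-\operatorname{tr}(A)\,e^{12}+\ast_{\mathfrak{g}_1}\left(\theta(A)\omega_7-\operatorname{tr}(A_1)\,\omega_7+\theta(B)\omega_1+\theta(C)\omega_2\right)$; (iv) $d\ast d\ast\varphi=\operatorname{tr}(A_1)\operatorname{tr}(A)\,e^{127}-\theta(A)\beta\wedge e^7-\theta(B)\beta\wedge e^1-\theta(C)\beta\wedge e^2$, where $\beta:=(\operatorname{tr}(A_1)+\operatorname{tr}(A))\,\omega_7+\theta(A^t)\omega_7+\theta(B^t)\omega_1+\theta(C^t)\omega_2$.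
   Context: $\mathfrak{g}$ is a $7$-dimensional Lie algebra with basis $\{e_1,\dots,e_7\}$, dual basis $\{e^1,\dots,e^7\}$, $e^{ij\dots}=e^i\wedge e^j\wedge\cdots$. The bracket is given by $A_1=\operatorname{ad}e_7|_{\operatorname{span}\{e_1,e_2\}}=\begin{pmatrix}x&z\\ y&w\end{pmatrix}$, $A=\operatorname{ad}e_7|_{\mathfrak{g}_1}$, $B=\operatorname{ad}e_1|_{\mathfrak{g}_1}$, $C=\operatorname{ad}e_2|_{\mathfrak{g}_1}$, where $\mathfrak{g}_1=\operatorname{span}\{e_3,e_4,e_5,e_6\}$ is an abelian ideal, $\operatorname{span}\{e_1,e_2\}$ is abelian, $\operatorname{span}\{e_7,e_1,e_2\}$ is a subalgebra, $\operatorname{tr}B=\operatorname{tr}C=0$, and $[A,B]=xB+yC$, $[A,C]=zB+wC$, $[B,C]=0$. The positive $3$-form $\varphi$ makes $\{e_1,\dots,e_7\}$ an oriented orthonormal basis; $\ast$ is its Hodge star and $\ast_{\mathfrak{g}_1}$ the Hodge star of $\Lambda^\bullet\mathfrak{g}_1^*$ (orientation $e^{3456}$). $\omega_7=e^{34}+e^{56}$, $\omega_1=e^{35}-e^{46}$, $\omega_2=-e^{36}-e^{45}$. For $M\in\mathfrak{gl}(\mathfrak{g}_1)$, $\theta(M)$ acts on $\Lambda^k\mathfrak{g}_1^*$ by $\theta(M)\alpha(v_1,\dots,v_k)=-\alpha(Mv_1,\dots,v_k)-\dots-\alpha(v_1,\dots,Mv_k)$. *)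

theory Defs
  imports Main "Jordan_Normal_Form.Matrix"
begin

text \<open>Left-invariant forms on the 7-dimensional Lie algebra with basis e_1,...,e_7 are
represented by their coefficient functions: a (possibly inhomogeneous) form alpha is a map
from finite sets of indices I (subsets of {1..7}) to reals; alpha I is the coefficient of
e^I = e^{i_1} wedge ... wedge e^{i_k}, where i_1 < ... < i_k are the elements of I.
Equivalently alpha I = alpha(e_{i_1},...,e_{i_k}) (determinant convention).\<close>

type_synonym form = "nat set \<Rightarrow> real"

definition fzero :: form where "fzero = (\<lambda>K. 0)"
definition fadd :: "form \<Rightarrow> form \<Rightarrow> form" (infixl "+\<^sub>f" 65)
  where "fadd a b = (\<lambda>K. a K + b K)"
definition fsub :: "form \<Rightarrow> form \<Rightarrow> form" (infixl "-\<^sub>f" 65)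
  where "fsub a b = (\<lambda>K. a K - b K)"
definition scal :: "real \<Rightarrow> form \<Rightarrow> form"
  where "scal c a = (\<lambda>K. c * a K)"

definition inv_count :: "nat list \<Rightarrow> nat" where
  "inv_count xs = card {(a,b). a < b \<and> b < length xs \<and> xs!a > xs!b}"
definition sgn_list :: "nat list \<Rightarrow> real" where
  "sgn_list xs = (-1) ^ inv_count xs"

text \<open>Value of a form on the basis vectors e_{x_1},...,e_{x_k}.\<close>
definition evalf :: "form \<Rightarrow> nat list \<Rightarrow> real" where
  "evalf a xs = (if distinct xs then sgn_list xs * a (set xs) else 0)"

definition sgn_pair :: "nat set \<Rightarrow> nat set \<Rightarrow> real" where
  "sgn_pair I J = (-1) ^ card {(i,j). i \<in> I \<and> j \<in> J \<and> i > j}"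
definition wedge :: "form \<Rightarrow> form \<Rightarrow> form" (infixl "\<wedge>\<^sub>f" 70) where
  "wedge a b = (\<lambda>K. \<Sum>I\<in>Pow K. sgn_pair I (K - I) * a I * b (K - I))"

definition fone :: form where "fone = (\<lambda>K. if K = {} then 1 else 0)"
definition e1 :: "nat \<Rightarrow> form" where "e1 i = (\<lambda>K. if K = {i} then 1 else 0)"
definition ee :: "nat list \<Rightarrow> form" where "ee xs = foldr (\<lambda>i acc. e1 i \<wedge>\<^sub>f acc) xs fone"

text \<open>Structure constants: [e_i, e_j] = sum_l c i j l e_l. Indices 3..6 of g_1 correspond
to the row/column indices 0..3 of the 4x4 matrices A, B, C.\<close>
definition brk0 :: "real \<Rightarrow> real \<Rightarrow> real \<Rightarrow> real \<Rightarrow> real mat \<Rightarrow> real mat \<Rightarrow> real mat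
   \<Rightarrow> nat \<Rightarrow> nat \<Rightarrow> nat \<Rightarrow> real" where
  "brk0 x y z w A B C i j l =
    (if i = 7 \<and> j = 1 then (if l = 1 then x else if l = 2 then y else 0)
     else if i = 7 \<and> j = 2 then (if l = 1 then z else if l = 2 then w else 0)
     else if i = 7 \<and> j \<in> {3..6} \<and> l \<in> {3..6} then A $$ (l - 3, j - 3)
     else if i = 1 \<and> j \<in> {3..6} \<and> l \<in> {3..6} then B $$ (l - 3, j - 3)
     else if i = 2 \<and> j \<in> {3..6} \<and> l \<in> {3..6} then C $$ (l - 3, j - 3)
     else 0)"

definition lie_c :: "real \<Rightarrow> real \<Rightarrow> real \<Rightarrow> real \<Rightarrow> real mat \<Rightarrow> real mat \<Rightarrow> real mat
   \<Rightarrow> nat \<Rightarrow> nat \<Rightarrow> nat \<Rightarrow> real" where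
  "lie_c x y z w A B C i j l = brk0 x y z w A B C i j l - brk0 x y z w A B C j i l"

text \<open>Chevalley-Eilenberg differential of left-invariant forms:
 d alpha(X_0,...,X_p) = sum_{a<b} (-1)^(a+b) alpha([X_a,X_b], X_0,..^a..^b..,X_p).\<close>
definition dCE :: "(nat \<Rightarrow> nat \<Rightarrow> nat \<Rightarrow> real) \<Rightarrow> form \<Rightarrow> form" where
  "dCE c a = (\<lambda>K. let ks = sorted_list_of_set K; n = length ks in
     \<Sum>i<n. \<Sum>j\<in>{i<..<n}. (-1) ^ (i + j) *
        (\<Sum>l\<in>{1..7}. c (ks!i) (ks!j) l *
            evalf a (l # [ks!m. m \<leftarrow> [0..<n], m \<noteq> i \<and> m \<noteq> j])))"

text \<open>Hodge star for the orthonormal basis {e_u : u in U}, oriented by the increasing order: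
 *e^I = sign(I, U-I) e^{U-I}.\<close>
definition hodge :: "nat set \<Rightarrow> form \<Rightarrow> form" where
  "hodge U a = (\<lambda>J. if J \<subseteq> U then
      sgn_list (sorted_list_of_set (U - J) @ sorted_list_of_set J) * a (U - J) else 0)"

abbreviation hodge7 :: "form \<Rightarrow> form" where "hodge7 \<equiv> hodge {1..7}"
abbreviation hodge_g1 :: "form \<Rightarrow> form" where "hodge_g1 \<equiv> hodge {3..6}"

text \<open>theta(M) on Lambda g_1^*, M e_k = sum_l M_(l-3,k-3) e_l for k,l in {3..6}:
 theta(M) alpha(v_1,...,v_k) = - sum_a alpha(v_1,..,M v_a,..,v_k).\<close>
definition theta :: "real mat \<Rightarrow> form \<Rightarrow> form" where
  "theta M a = (\<lambda>K. if K \<subseteq> {3..6} then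
     - (let ks = sorted_list_of_set K in
        \<Sum>i<length ks. \<Sum>l\<in>{3..6}. M $$ (l - 3, ks!i - 3) * evalf a (ks[i := l]))
     else 0)"

definition mtrace :: "real mat \<Rightarrow> real" where
  "mtrace M = (\<Sum>i<dim_row M. M $$ (i, i))"

definition phi :: form where
  "phi = ee [1,2,7] +\<^sub>f ee [3,4,7] +\<^sub>f ee [5,6,7] +\<^sub>f ee [1,3,5] -\<^sub>f ee [1,4,6]
         -\<^sub>f ee [2,3,6] -\<^sub>f ee [2,4,5]"

definition om7 :: form where "om7 = ee [3,4] +\<^sub>f ee [5,6]"
definition om1 :: form where "om1 = ee [3,5] -\<^sub>f ee [4,6]"
definition om2 :: form where "om2 = scal (-1) (ee [3,6]) -\<^sub>f ee [4,5]"

end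

theory Submission
  imports Defs
begin

(*
  All identities are checked coefficientwise. A k-form on span{e_1,...,e_7} is determined by its
  coefficients on the increasing k-element index lists, so an identity between k-forms reduces to
  finitely many scalar identities; these are verified by evaluating wedge products, Hodge stars,
  theta and the Chevalley-Eilenberg differential on basis elements.

  Parts (i) and (ii) are computed directly; the hypotheses tr B = tr C = 0 remove the e^{13456} and
  e^{23456} components of d*phi. Part (iii) follows by linearity from *e^{34567} = e^{12} and
  *(gamma ^ e^{127}) = *_g1 gamma for 2-forms gamma on g_1. For (iv) let
  xi = theta(A) om7 - tr(A_1) om7 + theta(B) om1 + theta(C) om2. The forms om7, om1, om2 are
  self-dual and *_g1 (theta(M) gamma) = - theta(M^t) *_g1 gamma - tr(M) *_g1 gamma for 2-forms
  gamma on g_1, hence *_g1 xi = - beta. Finally d e^{12} = - tr(A_1) e^{127} and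
  d gamma = theta(A) gamma ^ e^7 + theta(B) gamma ^ e^1 + theta(C) gamma ^ e^2 for 2-forms gamma
  on g_1.
*)

text \<open>Indices are kept as numerals, never as \<open>Suc 0\<close>, in the coefficient computations.\<close>
declare One_nat_def [simp del]

subsection \<open>Coefficients on increasing index lists\<close>

lemma form_ops_apply [simp]:
  "(a +\<^sub>f b) K = a K + b K" "(a -\<^sub>f b) K = a K - b K" "scal c a K = c * a K"
  by (simp_all add: fadd_def fsub_def scal_def)

lemma inv_count_Nil: "inv_count [] = 0"
  by (simp add: inv_count_def)

lemma inv_count_Cons: "inv_count (x # xs) = length (filter (\<lambda>y. y < x) xs) + inv_count xs"
proof -
  let ?S = "{(a, b). a < b \<and> b < length (x # xs) \<and> (x # xs) ! a > (x # xs) ! b}"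
  let ?P = "(\<lambda>b. (0::nat, Suc b)) ` {b. b < length xs \<and> xs ! b < x}"
  let ?Q = "(\<lambda>(a, b). (Suc a, Suc b)) ` {(a, b). a < b \<and> b < length xs \<and> xs ! a > xs ! b}"
  have split: "?S = ?P \<union> ?Q"
  proof (intro equalityI subsetI)
    fix p assume "p \<in> ?S"
    then obtain a b' where p: "p = (a, Suc b')" and ab: "a < Suc b'" "b' < length xs"
        "(x # xs) ! a > xs ! b'"
      by (auto simp: less_Suc_eq_0_disj)
    show "p \<in> ?P \<union> ?Q"
    proof (cases a)
      case 0
      then have "b' \<in> {b. b < length xs \<and> xs ! b < x}" using ab by simp
      then show ?thesis using p 0 by blast
    next
      case (Suc a')
      then have "(a', b') \<in> {(a, b). a < b \<and> b < length xs \<and> xs ! a > xs ! b}" using ab by simp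
      then have "(Suc a', Suc b') \<in> ?Q" by (rule image_eqI[rotated]) simp
      then show ?thesis using p Suc by blast
    qed
  next
    fix p assume "p \<in> ?P \<union> ?Q"
    then show "p \<in> ?S" by auto
  qed
  have "finite {(a, b). a < b \<and> b < length xs \<and> xs ! a > xs ! b}"
    by (rule finite_subset[of _ "{..<length xs} \<times> {..<length xs}"]) auto
  then have "card ?S = card ?P + card ?Q"
    unfolding split by (intro card_Un_disjoint) auto
  moreover have "card ?P = length (filter (\<lambda>y. y < x) xs)"
    by (subst card_image) (auto simp: inj_on_def length_filter_conv_card)
  moreover have "card ?Q = inv_count xs"
    unfolding inv_count_def by (subst card_image) (auto simp: inj_on_def)
  ultimately show ?thesis
    unfolding inv_count_def[of "x # xs"] by simp
qed

lemma sgn_pair_set: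
  assumes "distinct xs" "distinct ys"
  shows "sgn_pair (set xs) (set ys) = (-1) ^ length (filter (\<lambda>(i, j). j < i) (List.product xs ys))"
proof -
  have "{(i, j). i \<in> set xs \<and> j \<in> set ys \<and> i > j} = set (filter (\<lambda>(i, j). j < i) (List.product xs ys))"
    by auto
  moreover have "distinct (filter (\<lambda>(i, j). j < i) (List.product xs ys))"
    using assms by (simp add: distinct_product)
  ultimately show ?thesis
    unfolding sgn_pair_def by (metis distinct_card)
qed

text \<open>A copy of \<^const>\<open>set\<close> that the simplifier leaves alone, so that coefficients
  \<open>a (idx_set ks)\<close> stay indexed by the increasing list \<open>ks\<close> and the evaluation rules below
  can match them.\<close>
definition idx_set :: "nat list \<Rightarrow> nat set" where "idx_set = set"

definition basis_form :: "nat list \<Rightarrow> form" where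
  "basis_form ts = (\<lambda>K. if K = set ts then 1 else 0)"

text \<open>The congruence rule makes the simplifier evaluate the index list before the summand.\<close>
definition lsum :: "(nat \<Rightarrow> real) \<Rightarrow> nat list \<Rightarrow> real" where
  "lsum f xs = sum_list (map f xs)"

lemma lsum_cong [cong]: "xs = ys \<Longrightarrow> lsum f xs = lsum f ys"
  by simp

lemma lsum_simps: "lsum f [] = 0" "lsum f (x # xs) = f x + lsum f xs"
  by (simp_all add: lsum_def)

lemma sorted_list_of_set_set_sorted: "sorted_wrt (<) ks \<Longrightarrow> sorted_list_of_set (set ks) = ks"
  by (metis finite_set sorted_list_of_set.set_sorted_key_list_of_set
      sorted_list_of_set.strict_sorted_key_list_of_set strict_sorted_equal)

lemma basis_form_idx_set:
  "sorted_wrt (<) ks \<Longrightarrow> sorted_wrt (<) ts \<Longrightarrow>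
    basis_form ts (idx_set ks) = (if ks = ts then 1 else 0)"
  unfolding basis_form_def idx_set_def using strict_sorted_equal by metis

lemma evalf_eq: "evalf a xs = (if distinct xs then (-1) ^ inv_count xs * a (idx_set (sort xs)) else 0)"
  by (simp add: evalf_def sgn_list_def idx_set_def)

lemma wedge_basis_form:
  "(a \<wedge>\<^sub>f basis_form ts) K =
    (if finite K \<and> set ts \<subseteq> K then sgn_pair (K - set ts) (set ts) * a (K - set ts) else 0)"
proof (cases "finite K")
  case True
  then have "(a \<wedge>\<^sub>f basis_form ts) K =
      (\<Sum>I\<in>Pow K. if I = K - set ts \<and> set ts \<subseteq> K then sgn_pair I (K - I) * a I else 0)"
    unfolding wedge_def basis_form_def by (intro sum.cong) auto
  also have "\<dots> = (if set ts \<subseteq> K then sgn_pair (K - set ts) (set ts) * a (K - set ts) else 0)"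
    using True by (auto simp: double_diff)
  finally show ?thesis using True by simp
qed (simp add: wedge_def)

lemma wedge_basis_form_idx_set:
  assumes "sorted_wrt (<) ks" "sorted_wrt (<) ts"
  shows "(a \<wedge>\<^sub>f basis_form ts) (idx_set ks) = (if set ts \<subseteq> set ks then
     (-1) ^ length (filter (\<lambda>(i, j). j < i) (List.product (filter (\<lambda>x. x \<notin> set ts) ks) ts))
      * a (idx_set (filter (\<lambda>x. x \<notin> set ts) ks)) else 0)"
proof -
  have "distinct ks" "distinct ts"
    using assms strict_sorted_iff by auto
  then have "sgn_pair (set (filter (\<lambda>x. x \<notin> set ts) ks)) (set ts) =
      (-1) ^ length (filter (\<lambda>(i, j). j < i) (List.product (filter (\<lambda>x. x \<notin> set ts) ks) ts))"
    by (intro sgn_pair_set) auto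
  moreover have "set ks - set ts = set (filter (\<lambda>x. x \<notin> set ts) ks)"
    by auto
  ultimately show ?thesis
    unfolding wedge_basis_form idx_set_def by simp
qed

lemma ee_eq_basis_form [simp]: "sorted_wrt (<) xs \<Longrightarrow> ee xs = basis_form xs"
proof (induction xs)
  case Nil
  then show ?case by (simp add: ee_def fone_def basis_form_def)
next
  case (Cons i xs)
  then have ee_xs: "ee xs = basis_form xs" and less: "\<forall>j\<in>set xs. i < j" by auto
  have "{(a, b). a \<in> {i} \<and> b \<in> set xs \<and> a > b} = {}"
    using less by auto
  then have sgn: "sgn_pair {i} (set xs) = 1"
    unfolding sgn_pair_def by (simp only: card.empty power_0)
  have "(e1 i \<wedge>\<^sub>f basis_form xs) K = basis_form (i # xs) K" for K
  proof (cases "K = insert i (set xs)")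
    case True
    then have "K - set xs = {i}" using less by auto
    then show ?thesis
      using True sgn unfolding wedge_basis_form by (auto simp: e1_def basis_form_def)
  next
    case False
    then have "\<not> (set xs \<subseteq> K \<and> K - set xs = {i})" by auto
    then show ?thesis
      using False unfolding wedge_basis_form by (auto simp: e1_def basis_form_def)
  qed
  then show ?case
    by (simp add: ee_def ee_xs[unfolded ee_def] fun_eq_iff)
qed

lemma hodge_idx_set:
  assumes "sorted_wrt (<) us" "sorted_wrt (<) ks"
  shows "hodge (set us) a (idx_set ks) = (if set ks \<subseteq> set us then
     (-1) ^ inv_count (filter (\<lambda>x. x \<notin> set ks) us @ ks)
      * a (idx_set (filter (\<lambda>x. x \<notin> set ks) us)) else 0)"
proof -
  have diff: "set us - set ks = set (filter (\<lambda>x. x \<notin> set ks) us)"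
    by auto
  have "sorted_wrt (<) (filter (\<lambda>x. x \<notin> set ks) us)"
    using assms sorted_wrt_filter by blast
  then show ?thesis
    unfolding hodge_def idx_set_def sgn_list_def diff
    by (simp only: sorted_list_of_set_set_sorted assms)
qed

lemma set_1_to_7: "{1..7} = set [1, 2, 3, 4, 5, 6, 7::nat]"
  by auto

lemma set_3_to_6: "{3..6} = set [3, 4, 5, 6::nat]"
  by auto

lemma hodge7_idx_set:
  "sorted_wrt (<) ks \<Longrightarrow> hodge7 a (idx_set ks) = (if set ks \<subseteq> set [1,2,3,4,5,6,7] then
     (-1) ^ inv_count (filter (\<lambda>x. x \<notin> set ks) [1,2,3,4,5,6,7] @ ks)
      * a (idx_set (filter (\<lambda>x. x \<notin> set ks) [1,2,3,4,5,6,7])) else 0)"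
  unfolding set_1_to_7 by (rule hodge_idx_set) simp_all

lemma hodge_g1_idx_set:
  "sorted_wrt (<) ks \<Longrightarrow> hodge_g1 a (idx_set ks) = (if set ks \<subseteq> set [3,4,5,6] then
     (-1) ^ inv_count (filter (\<lambda>x. x \<notin> set ks) [3,4,5,6] @ ks)
      * a (idx_set (filter (\<lambda>x. x \<notin> set ks) [3,4,5,6])) else 0)"
  unfolding set_3_to_6 by (rule hodge_idx_set) simp_all

lemma sum_lessThan_lsum: "sum f {..<n} = lsum f [0..<n]"
  by (simp add: lsum_def atLeast_upt sum_list_distinct_conv_sum_set)

lemma sum_greaterThanLessThan_lsum: "sum f {i<..<n} = lsum f [Suc i..<n]"
  by (metis atLeastSucLessThan_greaterThanLessThan lsum_def set_upt sum_set_upt_conv_sum_list_nat)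

lemma sum_1_to_7_lsum: "sum f {1..7} = lsum f [1,2,3,4,5,6,7]"
  by (simp add: lsum_def set_1_to_7)

lemma dCE_idx_set:
  "sorted_wrt (<) ks \<Longrightarrow> dCE c a (idx_set ks) =
   lsum (\<lambda>i. lsum (\<lambda>j. (-1) ^ (i + j) *
        lsum (\<lambda>l. c (ks!i) (ks!j) l *
            evalf a (l # [ks!m. m \<leftarrow> [0..<length ks], m \<noteq> i \<and> m \<noteq> j])) [1,2,3,4,5,6,7])
      [Suc i..<length ks]) [0..<length ks]"
  unfolding dCE_def idx_set_def Let_def
  by (simp only: sorted_list_of_set_set_sorted sum_lessThan_lsum sum_greaterThanLessThan_lsum
      sum_1_to_7_lsum)

lemma theta_idx_set:
  "sorted_wrt (<) ks \<Longrightarrow> theta M a (idx_set ks) =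
  (if set ks \<subseteq> {3..6} then
     - lsum (\<lambda>i. lsum (\<lambda>l. M $$ (l - 3, ks!i - 3) * evalf a (ks[i := l])) [3,4,5,6]) [0..<length ks]
   else 0)"
  unfolding theta_def idx_set_def Let_def set_3_to_6
  by (simp add: sorted_list_of_set_set_sorted sum_lessThan_lsum lsum_def sum_list_distinct_conv_sum_set)

lemma mtrace_4: "M \<in> carrier_mat 4 4 \<Longrightarrow> mtrace M = M $$ (0,0) + M $$ (1,1) + M $$ (2,2) + M $$ (3,3)"
  by (simp add: mtrace_def sum_lessThan_lsum upt_rec lsum_simps One_nat_def[symmetric])

subsection \<open>Forms of fixed degree on a set of indices\<close>

definition kform_on :: "nat set \<Rightarrow> nat \<Rightarrow> form \<Rightarrow> bool" where
  "kform_on U k a \<longleftrightarrow> (\<forall>K. a K \<noteq> 0 \<longrightarrow> K \<subseteq> U \<and> card K = k)"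

lemma kform_onD: "kform_on U k a \<Longrightarrow> a K \<noteq> 0 \<Longrightarrow> K \<subseteq> U \<and> card K = k"
  unfolding kform_on_def by blast

lemma kform_on_add: "kform_on U k a \<Longrightarrow> kform_on U k b \<Longrightarrow> kform_on U k (a +\<^sub>f b)"
  unfolding kform_on_def by force

lemma kform_on_sub: "kform_on U k a \<Longrightarrow> kform_on U k b \<Longrightarrow> kform_on U k (a -\<^sub>f b)"
  unfolding kform_on_def by force

lemma kform_on_scal: "kform_on U k a \<Longrightarrow> kform_on U k (scal c a)"
  unfolding kform_on_def by simp

lemma kform_on_mono: "kform_on U k a \<Longrightarrow> U \<subseteq> V \<Longrightarrow> kform_on V k a"
  unfolding kform_on_def by blast

lemma kform_on_idx_set_eq_0: "kform_on U k a \<Longrightarrow> \<not> set ks \<subseteq> U \<Longrightarrow> a (idx_set ks) = 0"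
  unfolding kform_on_def idx_set_def by blast

lemma kform_on_ee: "sorted_wrt (<) ts \<Longrightarrow> set ts \<subseteq> U \<Longrightarrow> length ts = k \<Longrightarrow> kform_on U k (ee ts)"
  unfolding kform_on_def by (auto simp: basis_form_def strict_sorted_iff distinct_card split: if_splits)

lemma kform_on_wedge:
  assumes "finite U" "kform_on U p a" "kform_on U q b"
  shows "kform_on U (p + q) (a \<wedge>\<^sub>f b)"
  unfolding kform_on_def
proof (intro allI impI)
  fix K assume "(a \<wedge>\<^sub>f b) K \<noteq> 0"
  then obtain I where "I \<in> Pow K" "sgn_pair I (K - I) * a I * b (K - I) \<noteq> 0"
    unfolding wedge_def by (rule sum.not_neutral_contains_not_neutral)
  then have I: "I \<subseteq> K" "a I \<noteq> 0" "b (K - I) \<noteq> 0"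
    by auto
  have IU: "I \<subseteq> U" "card I = p"
    using kform_onD[OF assms(2) I(2)] by simp_all
  have KIU: "K - I \<subseteq> U" "card (K - I) = q"
    using kform_onD[OF assms(3) I(3)] by simp_all
  have "K \<subseteq> I \<union> (K - I)"
    by (simp add: Un_upper2)
  also have "\<dots> \<subseteq> U"
    using IU(1) KIU(1) by (rule Un_least)
  finally have "K \<subseteq> U" .
  then have "finite K"
    using assms(1) by (rule finite_subset)
  moreover have "finite I"
    using I(1) \<open>finite K\<close> by (rule finite_subset)
  ultimately show "K \<subseteq> U \<and> card K = p + q"
    using \<open>K \<subseteq> U\<close> IU(2) KIU(2) card_Diff_subset[of I K] card_mono[of K I] I(1) by simp
qed

lemma kform_on_wedge_ee:
  "finite U \<Longrightarrow> kform_on U (k - length ts) a \<Longrightarrow> sorted_wrt (<) ts \<Longrightarrow> set ts \<subseteq> U \<Longrightarrow>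
    length ts \<le> k \<Longrightarrow> kform_on U k (a \<wedge>\<^sub>f ee ts)"
  using kform_on_wedge[of U "k - length ts" a "length ts" "ee ts"] kform_on_ee by simp

lemma kform_on_hodge:
  assumes "finite U" "kform_on U (card U - k) a" "k \<le> card U" "U \<subseteq> V"
  shows "kform_on V k (hodge U a)"
  unfolding kform_on_def
proof (intro allI impI)
  fix J assume "hodge U a J \<noteq> 0"
  then have J: "J \<subseteq> U" "a (U - J) \<noteq> 0"
    unfolding hodge_def by (auto split: if_splits)
  then have "card (U - J) = card U - k"
    using kform_onD[OF assms(2) J(2)] by simp
  moreover have "card (U - J) = card U - card J" "card J \<le> card U"
    using J(1) assms(1) by (auto simp: card_Diff_subset finite_subset card_mono)
  ultimately show "J \<subseteq> V \<and> card J = k"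
    using J(1) assms(3,4) by auto
qed

lemma kform_on_theta:
  assumes "kform_on V k a" "{3..6} \<subseteq> V"
  shows "kform_on V k (theta M a)"
  unfolding kform_on_def
proof (intro allI impI)
  fix K assume nz: "theta M a K \<noteq> 0"
  define ks where "ks = sorted_list_of_set K"
  have K: "K \<subseteq> {3..6}"
    using nz unfolding theta_def by (auto split: if_splits)
  then have "length ks = card K"
    unfolding ks_def by (simp add: finite_subset)
  from nz K have "(\<Sum>i<length ks. \<Sum>l\<in>{3..6}. M $$ (l - 3, ks ! i - 3) * evalf a (ks[i := l])) \<noteq> 0"
    unfolding theta_def Let_def ks_def by simp
  then obtain i where "i \<in> {..<length ks}"
    and "(\<Sum>l\<in>{3..6}. M $$ (l - 3, ks ! i - 3) * evalf a (ks[i := l])) \<noteq> 0"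
    by (rule sum.not_neutral_contains_not_neutral)
  from this(2) obtain l where "l \<in> {3..6}" "M $$ (l - 3, ks ! i - 3) * evalf a (ks[i := l]) \<noteq> 0"
    by (rule sum.not_neutral_contains_not_neutral)
  then have "evalf a (ks[i := l]) \<noteq> 0"
    by simp
  then have "distinct (ks[i := l])" "a (set (ks[i := l])) \<noteq> 0"
    by (simp_all add: evalf_def split: if_splits)
  then have "card K = k"
    using kform_onD[OF assms(1)] distinct_card[of "ks[i := l]"] \<open>length ks = card K\<close> by simp
  then show "K \<subseteq> V \<and> card K = k"
    using K assms(2) by auto
qed

lemma comprehension_eq_map_filter: "[f m. m \<leftarrow> xs, P m] = map f (filter P xs)"
  by (induction xs) auto

lemma kform_on_dCE:
  assumes a: "kform_on U (k - 1) a" and "0 < k"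
    and c: "\<And>i j l. i \<notin> U \<or> j \<notin> U \<Longrightarrow> c i j l = 0"
  shows "kform_on U k (dCE c a)"
  unfolding kform_on_def
proof (intro allI impI)
  fix K assume nz: "dCE c a K \<noteq> 0"
  define ks where "ks = sorted_list_of_set K"
  let ?rest = "\<lambda>i j. [ks ! m. m \<leftarrow> [0..<length ks], m \<noteq> i \<and> m \<noteq> j]"
  have "finite K"
    using nz by (rule contrapos_np) (simp add: dCE_def)
  then have ks: "set ks = K" "length ks = card K"
    unfolding ks_def by simp_all
  from nz have "(\<Sum>i<length ks. \<Sum>j\<in>{i<..<length ks}. (-1) ^ (i + j) *
      (\<Sum>l\<in>{1..7}. c (ks ! i) (ks ! j) l * evalf a (l # ?rest i j))) \<noteq> 0"
    unfolding dCE_def Let_def ks_def .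
  then obtain i where "i \<in> {..<length ks}" and "(\<Sum>j\<in>{i<..<length ks}. (-1) ^ (i + j) *
      (\<Sum>l\<in>{1..7}. c (ks ! i) (ks ! j) l * evalf a (l # ?rest i j))) \<noteq> 0"
    by (rule sum.not_neutral_contains_not_neutral)
  from this(2) obtain j where "j \<in> {i<..<length ks}" and "(-1) ^ (i + j) *
      (\<Sum>l\<in>{1..7}. c (ks ! i) (ks ! j) l * evalf a (l # ?rest i j)) \<noteq> 0"
    by (rule sum.not_neutral_contains_not_neutral)
  then have ij: "i < j" "j < length ks"
    and "(\<Sum>l\<in>{1..7}. c (ks ! i) (ks ! j) l * evalf a (l # ?rest i j)) \<noteq> 0"
    by simp_all
  from this(3) obtain l where "l \<in> {1..7}" "c (ks ! i) (ks ! j) l * evalf a (l # ?rest i j) \<noteq> 0"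
    by (rule sum.not_neutral_contains_not_neutral)
  then have "c (ks ! i) (ks ! j) l \<noteq> 0" and ev: "evalf a (l # ?rest i j) \<noteq> 0"
    by simp_all
  then have ij_U: "ks ! i \<in> U" "ks ! j \<in> U"
    using c by blast+
  from ev have rest_distinct: "distinct (l # ?rest i j)" and "a (set (l # ?rest i j)) \<noteq> 0"
    by (simp_all add: evalf_def split: if_splits)
  from kform_onD[OF a this(2)] have rest_U: "set (?rest i j) \<subseteq> U"
    and rest_card: "card (set (l # ?rest i j)) = k - 1"
    by simp_all
  have rest_length: "length (?rest i j) = length ks - 2"
  proof -
    have "length (?rest i j) = length (filter (\<lambda>m. m \<noteq> i \<and> m \<noteq> j) [0..<length ks])"
      by (simp add: comprehension_eq_map_filter)
    also have "\<dots> = card (set (filter (\<lambda>m. m \<noteq> i \<and> m \<noteq> j) [0..<length ks]))"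
      by (rule distinct_card[symmetric]) simp
    also have "set (filter (\<lambda>m. m \<noteq> i \<and> m \<noteq> j) [0..<length ks]) = {0..<length ks} - {i, j}"
      by auto
    also have "card \<dots> = length ks - 2"
      using ij by (simp add: card_Diff_subset)
    finally show ?thesis .
  qed
  have "Suc (length ks - 2) = k - 1"
    using distinct_card[OF rest_distinct] rest_card rest_length by simp
  then have "card K = k"
    using ij ks(2) \<open>0 < k\<close> by simp
  moreover have "K \<subseteq> U"
  proof
    fix v assume "v \<in> K"
    then obtain m where m: "m < length ks" "v = ks ! m"
      using ks(1) by (metis in_set_conv_nth)
    show "v \<in> U"
    proof (cases "m = i \<or> m = j")
      case False
      then have "v \<in> set (?rest i j)"
        using m by (auto simp: comprehension_eq_map_filter)
      then show ?thesis
        using rest_U by blast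
    qed (use ij_U m in auto)
  qed
  ultimately show "K \<subseteq> U \<and> card K = k"
    by simp
qed

lemma kform_on_eqI:
  assumes "set us = U" "distinct us" "kform_on U k a" "kform_on U k b"
    and "\<forall>ks\<in>set (subseqs us). length ks = k \<longrightarrow> a (idx_set ks) = b (idx_set ks)"
  shows "a = b"
proof (rule ext)
  fix K
  show "a K = b K"
  proof (cases "a K = 0 \<and> b K = 0")
    case False
    then have K: "K \<subseteq> U" "card K = k"
      using kform_onD[OF assms(3), of K] kform_onD[OF assms(4), of K] by auto
    then obtain ks where ks: "ks \<in> set (subseqs us)" "set ks = K"
      using subset_subseqs[of K us] assms(1) by auto
    moreover have "distinct ks"
      using subseqs_distinctD[OF ks(1) assms(2)] .
    ultimately have "length ks = k"
      using distinct_card K(2) by metis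
    then show ?thesis
      using assms(5) ks unfolding idx_set_def by auto
  qed auto
qed

lemma hodge_add: "hodge U (a +\<^sub>f b) = hodge U a +\<^sub>f hodge U b"
  by (simp add: fun_eq_iff hodge_def algebra_simps)

lemma hodge_scal: "hodge U (scal c a) = scal c (hodge U a)"
  by (simp add: fun_eq_iff hodge_def)

lemma hodge_sub: "hodge U (a -\<^sub>f b) = hodge U a -\<^sub>f hodge U b"
  by (simp add: fun_eq_iff hodge_def algebra_simps)

lemma evalf_add: "evalf (a +\<^sub>f b) xs = evalf a xs + evalf b xs"
  by (simp add: evalf_def algebra_simps)

lemma evalf_scal: "evalf (scal c a) xs = c * evalf a xs"
  by (simp add: evalf_def)

lemma dCE_add: "dCE c (a +\<^sub>f b) = dCE c a +\<^sub>f dCE c b"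
  by (simp add: fun_eq_iff dCE_def Let_def evalf_add algebra_simps sum.distrib)

lemma dCE_scal: "dCE c (scal r a) = scal r (dCE c a)"
  by (simp add: fun_eq_iff dCE_def Let_def evalf_scal sum_distrib_left algebra_simps)

subsection \<open>The Lie algebra\<close>

definition bracket_range :: "nat \<Rightarrow> nat \<Rightarrow> nat list" where
  "bracket_range i j =
    (if (i = 7 \<and> j \<in> {1, 2}) \<or> (j = 7 \<and> i \<in> {1, 2}) then [1, 2]
     else if (i \<in> {1, 2, 7} \<and> j \<in> {3..6}) \<or> (j \<in> {1, 2, 7} \<and> i \<in> {3..6}) then [3, 4, 5, 6]
     else [])"

lemma set_bracket_range:
  "i = 7 \<and> j \<in> {1, 2} \<or> j = 7 \<and> i \<in> {1, 2} \<Longrightarrow> set (bracket_range i j) = {1, 2}"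
  "i \<in> {1, 2, 7} \<and> j \<in> {3..6} \<or> j \<in> {1, 2, 7} \<and> i \<in> {3..6} \<Longrightarrow> set (bracket_range i j) = {3..6}"
  by (auto simp: bracket_range_def)

lemma bracket_range_cases: "bracket_range i j \<in> {[1, 2], [3, 4, 5, 6], []}"
  unfolding bracket_range_def by simp

lemma set_bracket_range_subset: "set (bracket_range i j) \<subseteq> {1..7}"
  using bracket_range_cases[of i j] by auto

lemma distinct_bracket_range: "distinct (bracket_range i j)"
  using bracket_range_cases[of i j] by auto

lemma brk0_nonzero:
  "brk0 x y z w A B C i j l \<noteq> 0 \<Longrightarrow>
    (i = 7 \<and> j \<in> {1, 2} \<and> l \<in> {1, 2}) \<or> (i \<in> {1, 2, 7} \<and> j \<in> {3..6} \<and> l \<in> {3..6})"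
  unfolding brk0_def by (auto split: if_splits)

lemma lie_c_eq_0:
  assumes "l \<notin> set (bracket_range i j)"
  shows "lie_c x y z w A B C i j l = 0"
proof (rule ccontr)
  assume "lie_c x y z w A B C i j l \<noteq> 0"
  then have "brk0 x y z w A B C i j l \<noteq> 0 \<or> brk0 x y z w A B C j i l \<noteq> 0"
    unfolding lie_c_def by auto
  then have "l \<in> set (bracket_range i j)"
    by (auto dest!: brk0_nonzero simp: set_bracket_range)
  with assms show False ..
qed

lemma lie_c_eq_0_outside: "i \<notin> {1..7} \<or> j \<notin> {1..7} \<Longrightarrow> lie_c x y z w A B C i j l = 0"
  by (rule lie_c_eq_0) (auto simp: bracket_range_def)

lemma kform_on_dCE_lie:
  "kform_on {1..7} (k - 1) a \<Longrightarrow> 0 < k \<Longrightarrow> kform_on {1..7} k (dCE (lie_c x y z w A B C) a)"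
  by (rule kform_on_dCE) (auto intro: lie_c_eq_0_outside)

lemma lsum_cong_fun: "(\<And>x. x \<in> set xs \<Longrightarrow> f x = g x) \<Longrightarrow> lsum f xs = lsum g xs"
  unfolding lsum_def by (metis map_eq_conv)

lemma lsum_1_to_7_bracket_range:
  assumes "\<And>l. l \<notin> set (bracket_range i j) \<Longrightarrow> f l = 0"
  shows "lsum f [1, 2, 3, 4, 5, 6, 7] = lsum f (bracket_range i j)"
proof -
  have "lsum f [1, 2, 3, 4, 5, 6, 7] = sum f {1..7}"
    by (simp add: sum_1_to_7_lsum)
  also have "\<dots> = sum f (set (bracket_range i j))"
    using assms set_bracket_range_subset by (intro sum.mono_neutral_right) auto
  also have "\<dots> = lsum f (bracket_range i j)"
    by (simp add: lsum_def sum_list_distinct_conv_sum_set distinct_bracket_range)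
  finally show ?thesis .
qed

lemma dCE_lie_idx_set:
  assumes "sorted_wrt (<) ks"
  shows "dCE (lie_c x y z w A B C) a (idx_set ks) =
   lsum (\<lambda>i. lsum (\<lambda>j. (-1) ^ (i + j) *
        lsum (\<lambda>l. lie_c x y z w A B C (ks!i) (ks!j) l *
            evalf a (l # [ks!m. m \<leftarrow> [0..<length ks], m \<noteq> i \<and> m \<noteq> j])) (bracket_range (ks!i) (ks!j)))
      [Suc i..<length ks]) [0..<length ks]"
  unfolding dCE_idx_set[OF assms]
  by (intro lsum_cong_fun arg_cong2[where f = "(*)"] refl lsum_1_to_7_bracket_range)
    (simp add: lie_c_eq_0)

lemma kform_on_7_eqI:
  assumes "kform_on {1..7} k a" "kform_on {1..7} k b"
    and "\<forall>ks\<in>set (subseqs [1, 2, 3, 4, 5, 6, 7]). length ks = k \<longrightarrow> a (idx_set ks) = b (idx_set ks)"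
  shows "a = b"
  using kform_on_eqI[OF set_1_to_7[symmetric] _ assms] by simp

lemma kform_on_g1_eqI:
  assumes "kform_on {3..6} k a" "kform_on {3..6} k b"
    and "\<forall>ks\<in>set (subseqs [3, 4, 5, 6]). length ks = k \<longrightarrow> a (idx_set ks) = b (idx_set ks)"
  shows "a = b"
  using kform_on_eqI[OF set_3_to_6[symmetric] _ assms] by simp

lemma nat_one_simps:
  "(case (1::nat) of 0 \<Rightarrow> a | Suc n \<Rightarrow> f n) = f 0"
  "(x # xs) ! (1::nat) = xs ! 0"
  "(x # xs)[(1::nat) := y] = x # xs[0 := y]"
  by (simp_all add: One_nat_def)

lemma mtrace_4_eq_0:
  assumes "M \<in> carrier_mat 4 4" "mtrace M = 0"
  shows "M $$ (3, 3) = - (M $$ (0, 0) + M $$ (1, 1) + M $$ (2, 2))"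
  using mtrace_4[OF assms(1)] assms(2) by simp

lemmas kform_intros = kform_on_add kform_on_sub kform_on_scal kform_on_ee kform_on_wedge_ee
  kform_on_hodge kform_on_theta kform_on_dCE_lie

lemmas coeff_simps = basis_form_idx_set wedge_basis_form_idx_set evalf_eq hodge7_idx_set
  hodge_g1_idx_set dCE_lie_idx_set theta_idx_set inv_count_Nil inv_count_Cons lsum_simps
  bracket_range_def nat_one_simps One_nat_def[symmetric] upt_rec

definition xi_form :: "real \<Rightarrow> real \<Rightarrow> real mat \<Rightarrow> real mat \<Rightarrow> real mat \<Rightarrow> form" where
  "xi_form x w A B C = theta A om7 -\<^sub>f scal (x + w) om7 +\<^sub>f theta B om1 +\<^sub>f theta C om2"

definition beta_form :: "real \<Rightarrow> real \<Rightarrow> real mat \<Rightarrow> real mat \<Rightarrow> real mat \<Rightarrow> form" where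
  "beta_form x w A B C = scal (x + w + mtrace A) om7 +\<^sub>f theta (transpose_mat A) om7
     +\<^sub>f theta (transpose_mat B) om1 +\<^sub>f theta (transpose_mat C) om2"

lemma kform_on_omegas: "kform_on {3..6} 2 om7" "kform_on {3..6} 2 om1" "kform_on {3..6} 2 om2"
  unfolding om7_def om1_def om2_def by (intro kform_intros; simp)+

lemma kform_on_xi_form: "kform_on {3..6} 2 (xi_form x w A B C)"
  unfolding xi_form_def by (intro kform_intros kform_on_omegas; simp)+

lemma kform_on_beta_form: "kform_on {3..6} 2 (beta_form x w A B C)"
  unfolding beta_form_def by (intro kform_intros kform_on_omegas; simp)+

lemma hodge7_phi:
  "hodge7 phi = ee [3,4,5,6] +\<^sub>f om7 \<wedge>\<^sub>f ee [1,2] +\<^sub>f om1 \<wedge>\<^sub>f ee [2,7] -\<^sub>f om2 \<wedge>\<^sub>f ee [1,7]"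
  (is "?lhs = ?rhs")
proof (rule kform_on_7_eqI[where k = 4])
  show "kform_on {1..7} 4 ?lhs" "kform_on {1..7} 4 ?rhs"
    unfolding phi_def om7_def om1_def om2_def by (intro kform_intros; simp)+
qed (simp add: phi_def om7_def om1_def om2_def coeff_simps split del: if_split)

lemma dCE_hodge7_phi:
  assumes "A \<in> carrier_mat 4 4" "B \<in> carrier_mat 4 4" "C \<in> carrier_mat 4 4"
    and "mtrace B = 0" "mtrace C = 0"
  shows "dCE (lie_c x y z w A B C) (hodge7 phi) =
    scal (- mtrace A) (ee [3,4,5,6,7]) +\<^sub>f xi_form x w A B C \<wedge>\<^sub>f ee [1,2,7]"
  (is "?lhs = ?rhs")
proof (rule kform_on_7_eqI[where k = 5])
  show "kform_on {1..7} 5 ?lhs"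
    unfolding phi_def by (intro kform_intros; simp)+
  show "kform_on {1..7} 5 ?rhs"
    using kform_on_mono[OF kform_on_xi_form, of "{1..7}"] by (intro kform_intros; simp)+
qed (simp add: hodge7_phi xi_form_def om7_def om1_def om2_def coeff_simps lie_c_def brk0_def
      mtrace_4[OF assms(1)] mtrace_4_eq_0[OF assms(2,4)] mtrace_4_eq_0[OF assms(3,5)]
      split del: if_split)

lemma hodge7_e34567: "hodge7 (ee [3,4,5,6,7]) = ee [1,2]"
  (is "?lhs = ?rhs")
proof (rule kform_on_7_eqI[where k = 2])
  show "kform_on {1..7} 2 ?lhs" "kform_on {1..7} 2 ?rhs"
    by (intro kform_intros; simp)+
qed (simp add: coeff_simps)

lemma hodge7_wedge_e127:
  assumes "kform_on {3..6} 2 \<gamma>"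
  shows "hodge7 (\<gamma> \<wedge>\<^sub>f ee [1,2,7]) = hodge_g1 \<gamma>"
  (is "?lhs = ?rhs")
proof (rule kform_on_7_eqI[where k = 2])
  show "kform_on {1..7} 2 ?lhs"
    using kform_on_mono[OF assms, of "{1..7}"] by (intro kform_intros; simp)+
  show "kform_on {1..7} 2 ?rhs"
    using assms by (intro kform_intros; simp)+
qed (simp add: coeff_simps)

lemma hodge_g1_omegas: "hodge_g1 om7 = om7" "hodge_g1 om1 = om1" "hodge_g1 om2 = om2"
  by (rule kform_on_g1_eqI[where k = 2], (intro kform_intros kform_on_omegas; simp)+,
      simp add: om7_def om1_def om2_def coeff_simps)+

lemma hodge_g1_theta:
  assumes "M \<in> carrier_mat 4 4" "kform_on {3..6} 2 \<gamma>"
  shows "hodge_g1 (theta M \<gamma>) =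
    scal (-1) (theta (transpose_mat M) (hodge_g1 \<gamma>) +\<^sub>f scal (mtrace M) (hodge_g1 \<gamma>))"
  (is "?lhs = ?rhs")
proof (rule kform_on_g1_eqI[where k = 2])
  show "kform_on {3..6} 2 ?lhs" "kform_on {3..6} 2 ?rhs"
    using assms(2) by (intro kform_intros; simp)+
qed (simp add: coeff_simps mtrace_4[OF assms(1)] carrier_matD[OF assms(1)] split del: if_split;
      simp add: algebra_simps)

lemma hodge_g1_xi_form:
  assumes "A \<in> carrier_mat 4 4" "B \<in> carrier_mat 4 4" "C \<in> carrier_mat 4 4"
    and "mtrace B = 0" "mtrace C = 0"
  shows "hodge_g1 (xi_form x w A B C) = scal (-1) (beta_form x w A B C)"
  unfolding xi_form_def beta_form_def hodge_add hodge_sub hodge_scal hodge_g1_omegas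
    hodge_g1_theta[OF assms(1) kform_on_omegas(1)] hodge_g1_theta[OF assms(2) kform_on_omegas(2)]
    hodge_g1_theta[OF assms(3) kform_on_omegas(3)]
  using assms(4,5) by (simp add: fun_eq_iff algebra_simps)

lemma dCE_e12: "dCE (lie_c x y z w A B C) (ee [1,2]) = scal (- (x + w)) (ee [1,2,7])"
  (is "?lhs = ?rhs")
proof (rule kform_on_7_eqI[where k = 3])
  show "kform_on {1..7} 3 ?lhs" "kform_on {1..7} 3 ?rhs"
    by (intro kform_intros; simp)+
qed (simp add: coeff_simps lie_c_def brk0_def split del: if_split)

lemma dCE_2form_on_g1:
  assumes "kform_on {3..6} 2 \<beta>"
  shows "dCE (lie_c x y z w A B C) \<beta> =
    theta A \<beta> \<wedge>\<^sub>f ee [7] +\<^sub>f theta B \<beta> \<wedge>\<^sub>f ee [1] +\<^sub>f theta C \<beta> \<wedge>\<^sub>f ee [2]"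
  (is "?lhs = ?rhs")
proof (rule kform_on_7_eqI[where k = 3])
  show "kform_on {1..7} 3 ?lhs" "kform_on {1..7} 3 ?rhs"
    using kform_on_mono[OF assms, of "{1..7}"] by (intro kform_intros; simp)+
qed (simp add: coeff_simps lie_c_def brk0_def kform_on_idx_set_eq_0[OF assms] split del: if_split)

theorem theorem2p4:
  fixes x y z w :: real and A B C :: "real mat"
  assumes "A \<in> carrier_mat 4 4" and "B \<in> carrier_mat 4 4" and "C \<in> carrier_mat 4 4"
    and "mtrace B = 0" and "mtrace C = 0"
    and "A * B - B * A = x \<cdot>\<^sub>m B + y \<cdot>\<^sub>m C"
    and "A * C - C * A = z \<cdot>\<^sub>m B + w \<cdot>\<^sub>m C"
    and "B * C - C * B = 0\<^sub>m 4 4"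
  shows "(hodge7 phi = ee [3,4,5,6] +\<^sub>f om7 \<wedge>\<^sub>f ee [1,2] +\<^sub>f om1 \<wedge>\<^sub>f ee [2,7]
                        -\<^sub>f om2 \<wedge>\<^sub>f ee [1,7])
    \<and> (dCE (lie_c x y z w A B C) (hodge7 phi) =
           scal (- mtrace A) (ee [3,4,5,6,7])
           +\<^sub>f (theta A om7 -\<^sub>f scal (x + w) om7 +\<^sub>f theta B om1 +\<^sub>f theta C om2) \<wedge>\<^sub>f ee [1,2,7])
    \<and> (hodge7 (dCE (lie_c x y z w A B C) (hodge7 phi)) =
           scal (- mtrace A) (ee [1,2])
           +\<^sub>f hodge_g1 (theta A om7 -\<^sub>f scal (x + w) om7 +\<^sub>f theta B om1 +\<^sub>f theta C om2))
    \<and> (let \<beta> = scal (x + w + mtrace A) om7 +\<^sub>f theta (transpose_mat A) om7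
                 +\<^sub>f theta (transpose_mat B) om1 +\<^sub>f theta (transpose_mat C) om2
         in dCE (lie_c x y z w A B C) (hodge7 (dCE (lie_c x y z w A B C) (hodge7 phi))) =
           scal ((x + w) * mtrace A) (ee [1,2,7]) -\<^sub>f theta A \<beta> \<wedge>\<^sub>f ee [7]
           -\<^sub>f theta B \<beta> \<wedge>\<^sub>f ee [1] -\<^sub>f theta C \<beta> \<wedge>\<^sub>f ee [2])"
proof -
  let ?d = "dCE (lie_c x y z w A B C)"
  note mats = assms(1-5)
  have d_star_phi: "?d (hodge7 phi) =
      scal (- mtrace A) (ee [3,4,5,6,7]) +\<^sub>f xi_form x w A B C \<wedge>\<^sub>f ee [1,2,7]"
    by (rule dCE_hodge7_phi[OF mats])
  have star_d_star_phi: "hodge7 (?d (hodge7 phi)) =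
      scal (- mtrace A) (ee [1,2]) +\<^sub>f hodge_g1 (xi_form x w A B C)"
    unfolding d_star_phi hodge_add hodge_scal hodge7_e34567 hodge7_wedge_e127[OF kform_on_xi_form] ..
  have "?d (hodge7 (?d (hodge7 phi))) =
      scal ((x + w) * mtrace A) (ee [1,2,7]) -\<^sub>f theta A (beta_form x w A B C) \<wedge>\<^sub>f ee [7]
      -\<^sub>f theta B (beta_form x w A B C) \<wedge>\<^sub>f ee [1] -\<^sub>f theta C (beta_form x w A B C) \<wedge>\<^sub>f ee [2]"
    unfolding star_d_star_phi hodge_g1_xi_form[OF mats] dCE_add dCE_scal dCE_e12
      dCE_2form_on_g1[OF kform_on_beta_form]
    by (simp add: fun_eq_iff algebra_simps)
  with hodge7_phi d_star_phi star_d_star_phi show ?thesis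
    unfolding Let_def xi_form_def beta_form_def by simp
qed

end
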